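(* Let $P,\tilde P\in\mathbb{R}^{n\times m}$ with $\mathrm{rank}(P)=n$, and let $\Omega=c+G\mathbf{B}_p$ with $c\in\mathbb{R}^m$, $G\in\mathbb{R}^{m\times p}$, $\mathrm{rank}(G)=m$. Assume $\|(\tilde P-P)c\|\le\|PG\|_l$. Then $\tilde P(c+\alpha G\mathbf{B}_p)\subseteq P\Omega$ for every $\alpha\in[0,\alpha_m]$, where $$\alpha_m=\frac{\|PG\|_l-\|(\tilde P-P)c\|}{\|PG\|_l+\|(\tilde P-P)G\|}.$$
   Context: A norm $\|\cdot\|$ is fixed on each $\mathbb{R}^k$; $\mathbf{B}_k$ is its closed unit ball, and matrices carry the induced operator norms $\|M\|=\sup_{\|x\|\le1}\|Mx\|$. For $M\in\mathbb{R}^{n\times m}\setminus\{0\}$ the matrix lower bound is $\|M\|_l=\max\{\mu\in\mathbb{R}:\ \forall y\in\mathrm{col}(M)\ \exists x\in\mathbb{R}^m \text{ with } Mx=y \text{ and } \mu\|x\|\le\|y\|\}$, where $\mathrm{col}(M)$ is the column space. Minkowski sums and images of sets under matrices are used. *)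

theory Defs
  imports "HOL-Analysis.Analysis"
begin

definition is_norm :: "('a::real_vector \<Rightarrow> real) \<Rightarrow> bool" where
  "is_norm N \<longleftrightarrow>
     (\<forall>x. 0 \<le> N x) \<and> (\<forall>x. N x = 0 \<longleftrightarrow> x = 0) \<and>
     (\<forall>a x. N (a *\<^sub>R x) = \<bar>a\<bar> * N x) \<and> (\<forall>x y. N (x + y) \<le> N x + N y)"

definition unit_ball :: "('a \<Rightarrow> real) \<Rightarrow> 'a set" where
  "unit_ball N = {x. N x \<le> 1}"

definition op_norm :: "(real^'m \<Rightarrow> real) \<Rightarrow> (real^'n \<Rightarrow> real) \<Rightarrow> real^'m^'n \<Rightarrow> real" where
  "op_norm Nm Nn M = Sup ((\<lambda>x. Nn (M *v x)) ` unit_ball Nm)"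

text \<open>Matrix lower bound (defined for M \<noteq> 0):
  max { mu | \<forall>y \<in> col M. \<exists>x. M x = y \<and> mu * Nm x \<le> Nn y }.\<close>
definition lower_bound :: "(real^'m \<Rightarrow> real) \<Rightarrow> (real^'n \<Rightarrow> real) \<Rightarrow> real^'m^'n \<Rightarrow> real" where
  "lower_bound Nm Nn M =
     (GREATEST mu. \<forall>y \<in> range (\<lambda>x. M *v x). \<exists>x. M *v x = y \<and> mu * Nm x \<le> Nn y)"

end

theory Submission
  imports Defs
begin

text \<open>Write \<open>L\<close> for the lower bound of \<open>P G\<close>, \<open>K\<close> for the operator norm of \<open>(P\<^sup>~ - P) G\<close> and
  \<open>e = \<parallel>(P\<^sup>~ - P) c\<parallel>\<close>. A point of \<open>P\<^sup>~ (c + \<alpha> G B)\<close> is \<open>P (c + \<alpha> G z) + v\<close> with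
  \<open>v = (P\<^sup>~ - P) (c + \<alpha> G z)\<close>, so \<open>\<parallel>v\<parallel> \<le> e + \<alpha> K\<close>, and the choice of \<open>\<alpha>\<close> makes this at most
  \<open>(1 - \<alpha>) L\<close>. By definition of the lower bound, \<open>v = P G w'\<close> with \<open>\<parallel>w'\<parallel> \<le> 1 - \<alpha>\<close>, so the
  point is \<open>P (c + G (\<alpha> z + w'))\<close> and \<open>\<alpha> z + w'\<close> lies in the unit ball. The only analytic
  input is that the maximum defining the lower bound is attained; this rests on the existence of
  minimal-norm preimages, by compactness, since all norms on a finite-dimensional space are
  equivalent.\<close>

lemma is_norm_zero: "is_norm N \<Longrightarrow> N 0 = 0"
  by (simp add: is_norm_def)

lemma is_norm_nonneg: "is_norm N \<Longrightarrow> 0 \<le> N x"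
  by (simp add: is_norm_def)

lemma is_norm_eq_zero_iff: "is_norm N \<Longrightarrow> N x = 0 \<longleftrightarrow> x = 0"
  by (simp add: is_norm_def)

lemma is_norm_pos: "is_norm N \<Longrightarrow> x \<noteq> 0 \<Longrightarrow> 0 < N x"
  using is_norm_nonneg is_norm_eq_zero_iff by (metis less_eq_real_def)

lemma is_norm_scaleR: "is_norm N \<Longrightarrow> N (a *\<^sub>R x) = \<bar>a\<bar> * N x"
  by (simp add: is_norm_def)

lemma is_norm_triangle: "is_norm N \<Longrightarrow> N (x + y) \<le> N x + N y"
  by (simp add: is_norm_def)

lemma is_norm_minus: "is_norm N \<Longrightarrow> N (- x) = N x"
  using is_norm_scaleR[of N "-1" x] by simp

lemma is_norm_sum: "is_norm N \<Longrightarrow> N (sum f A) \<le> (\<Sum>a\<in>A. N (f a))"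
proof (induction A rule: infinite_finite_induct)
  case (insert x F)
  then show ?case using is_norm_triangle[of N "f x" "sum f F"] by simp
qed (simp_all add: is_norm_zero)

lemma is_norm_bounded_by_norm:
  fixes N :: "'a::euclidean_space \<Rightarrow> real"
  assumes "is_norm N"
  shows "\<exists>C\<ge>0. \<forall>x. N x \<le> C * norm x"
proof (intro exI[of _ "\<Sum>b\<in>Basis. N b"] conjI allI)
  show "0 \<le> (\<Sum>b\<in>Basis. N b)"
    by (simp add: sum_nonneg is_norm_nonneg[OF assms])
  fix x :: 'a
  have "N x = N (\<Sum>b\<in>Basis. (x \<bullet> b) *\<^sub>R b)"
    by (simp add: euclidean_representation)
  also have "\<dots> \<le> (\<Sum>b\<in>Basis. N ((x \<bullet> b) *\<^sub>R b))"
    by (rule is_norm_sum[OF assms])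
  also have "\<dots> = (\<Sum>b\<in>Basis. \<bar>x \<bullet> b\<bar> * N b)"
    by (simp add: is_norm_scaleR[OF assms])
  also have "\<dots> \<le> (\<Sum>b\<in>Basis. norm x * N b)"
    by (intro sum_mono mult_right_mono is_norm_nonneg[OF assms]) (simp add: Basis_le_norm)
  finally show "N x \<le> (\<Sum>b\<in>Basis. N b) * norm x"
    by (simp add: sum_distrib_left mult.commute)
qed

lemma is_norm_continuous_on:
  fixes N :: "'a::euclidean_space \<Rightarrow> real"
  assumes "is_norm N"
  shows "continuous_on S N"
proof -
  obtain C where C: "C \<ge> 0" "\<And>x. N x \<le> C * norm x"
    using is_norm_bounded_by_norm[OF assms] by blast
  have "lipschitz_on C S N"
  proof (rule lipschitz_onI)
    fix x y
    have "N x \<le> N y + N (x - y)" "N y \<le> N x + N (y - x)"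
      using is_norm_triangle[OF assms, of y "x - y"] is_norm_triangle[OF assms, of x "y - x"]
      by simp_all
    moreover have "N (y - x) = N (x - y)"
      using is_norm_minus[OF assms, of "x - y"] by simp
    ultimately have "dist (N x) (N y) \<le> N (x - y)"
      by (simp add: dist_real_def abs_le_iff)
    also have "\<dots> \<le> C * dist x y"
      using C(2)[of "x - y"] by (simp add: dist_norm)
    finally show "dist (N x) (N y) \<le> C * dist x y" .
  qed (fact C(1))
  then show ?thesis
    by (rule lipschitz_on_continuous_on)
qed

lemma is_norm_bounded_below_by_norm:
  fixes N :: "'a::euclidean_space \<Rightarrow> real"
  assumes "is_norm N"
  shows "\<exists>c>0. \<forall>x. c * norm x \<le> N x"
proof -
  obtain x0 where x0: "x0 \<in> sphere 0 1" "\<And>y. y \<in> sphere 0 1 \<Longrightarrow> N x0 \<le> N y"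
    using continuous_attains_inf[OF compact_sphere _ is_norm_continuous_on[OF assms], of 0 1]
    by auto
  have "N x0 * norm x \<le> N x" for x
  proof (cases "x = 0")
    case False
    have "N x0 \<le> N ((1 / norm x) *\<^sub>R x)"
      using False by (intro x0(2)) simp
    then show ?thesis
      using False by (simp add: is_norm_scaleR[OF assms] field_simps)
  qed (simp add: is_norm_zero[OF assms])
  moreover have "0 < N x0"
    using x0(1) by (intro is_norm_pos[OF assms]) auto
  ultimately show ?thesis
    by blast
qed

lemma op_norm_nonneg_bound:
  fixes Nm :: "real^'m \<Rightarrow> real" and Nn :: "real^'n \<Rightarrow> real" and M :: "real^'m^'n"
  assumes m: "is_norm Nm" and n: "is_norm Nn"
  shows "0 \<le> op_norm Nm Nn M" and "Nn (M *v x) \<le> op_norm Nm Nn M * Nm x"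
proof -
  obtain C where C: "C \<ge> 0" "\<And>y. Nn y \<le> C * norm y"
    using is_norm_bounded_by_norm[OF n] by blast
  obtain c where c: "c > 0" "\<And>x. c * norm x \<le> Nm x"
    using is_norm_bounded_below_by_norm[OF m] by blast
  obtain K where K: "K > 0" "\<And>x. norm (M *v x) \<le> norm x * K"
    using bounded_linear.pos_bounded[OF matrix_vector_mul_bounded_linear] by blast
  have "bdd_above ((\<lambda>x. Nn (M *v x)) ` unit_ball Nm)"
  proof (rule bdd_aboveI2)
    fix x assume "x \<in> unit_ball Nm"
    then have "c * norm x \<le> 1"
      using c(2)[of x] by (simp add: unit_ball_def)
    then have "norm x \<le> 1 / c"
      using c(1) by (simp add: field_simps)
    then have "norm x * K \<le> 1 / c * K"
      using K(1) by (intro mult_right_mono) simp_all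
    then show "Nn (M *v x) \<le> C * (1 / c * K)"
      using C K(2)[of x] by (meson mult_left_mono order_trans)
  qed
  then have below: "Nn (M *v x) \<le> op_norm Nm Nn M" if "Nm x \<le> 1" for x
    using that unfolding op_norm_def by (intro cSUP_upper) (simp_all add: unit_ball_def)
  show "0 \<le> op_norm Nm Nn M"
    using below[of 0] by (simp add: is_norm_zero[OF m] is_norm_zero[OF n])
  show "Nn (M *v x) \<le> op_norm Nm Nn M * Nm x"
  proof (cases "x = 0")
    case False
    then have pos: "Nm x > 0"
      by (rule is_norm_pos[OF m])
    have "Nn (M *v ((1 / Nm x) *\<^sub>R x)) \<le> op_norm Nm Nn M"
      using pos by (intro below) (simp add: is_norm_scaleR[OF m])
    then show ?thesis
      using pos by (simp add: matrix_vector_mult_scaleR is_norm_scaleR[OF n] field_simps)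
  qed (simp add: is_norm_zero[OF m] is_norm_zero[OF n])
qed

lemma exists_min_norm_preimage:
  fixes N :: "'a::euclidean_space \<Rightarrow> real" and f :: "'a \<Rightarrow> 'b::real_normed_vector"
  assumes "is_norm N" and "linear f" and "y \<in> range f"
  shows "\<exists>x. f x = y \<and> (\<forall>x'. f x' = y \<longrightarrow> N x \<le> N x')"
proof -
  obtain x0 where x0: "f x0 = y"
    using assms(3) by blast
  obtain c where c: "c > 0" "\<And>x. c * norm x \<le> N x"
    using is_norm_bounded_below_by_norm[OF assms(1)] by blast
  define T where "T = {x. f x = y} \<inter> {x. N x \<le> N x0}"
  have "closed T"
    unfolding T_def using assms(2)
    by (intro closed_Int closed_Collect_eq closed_Collect_le is_norm_continuous_on[OF assms(1)]
        continuous_on_const linear_continuous_on) (simp_all add: linear_conv_bounded_linear)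
  moreover have "bounded T"
    unfolding bounded_iff
  proof (intro exI ballI)
    fix x assume "x \<in> T"
    then have "c * norm x \<le> N x0"
      using c(2)[of x] by (simp add: T_def)
    then show "norm x \<le> N x0 / c"
      using c(1) by (simp add: field_simps)
  qed
  ultimately have "compact T"
    by (simp add: compact_eq_bounded_closed)
  moreover have "T \<noteq> {}"
    using x0 by (auto simp: T_def)
  ultimately obtain x where x: "x \<in> T" "\<And>x'. x' \<in> T \<Longrightarrow> N x \<le> N x'"
    using continuous_attains_inf[OF _ _ is_norm_continuous_on[OF assms(1)]] by meson
  show ?thesis
  proof (intro exI conjI allI impI)
    show "f x = y"
      using x(1) by (simp add: T_def)
    fix x' assume "f x' = y"
    show "N x \<le> N x'"
    proof (cases "N x' \<le> N x0")
      case True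
      then show ?thesis using x(2) \<open>f x' = y\<close> by (simp add: T_def)
    next
      case False
      then show ?thesis using x(1) by (simp add: T_def)
    qed
  qed
qed

lemma Greatest_mult_le:
  fixes a b :: "'y \<Rightarrow> real"
  assumes "\<And>y. 0 \<le> a y" and "\<And>y. 0 \<le> b y" and "0 < a y0"
  shows "(GREATEST \<mu>. \<forall>y. \<mu> * a y \<le> b y) * a y \<le> b y"
proof -
  define S where "S = {\<mu>. \<forall>y. \<mu> * a y \<le> b y}"
  have "0 \<in> S"
    unfolding S_def using assms(2) by simp
  have "bdd_above S"
  proof (rule bdd_aboveI)
    fix \<mu> assume "\<mu> \<in> S"
    then have "\<mu> * a y0 \<le> b y0"
      by (simp add: S_def)
    then show "\<mu> \<le> b y0 / a y0"
      using assms(3) by (simp add: field_simps)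
  qed
  have "Sup S * a y \<le> b y" for y
  proof (cases "a y = 0")
    case False
    then have "a y > 0"
      using assms(1) less_eq_real_def by auto
    moreover have "Sup S \<le> b y / a y"
    proof (rule cSup_least)
      show "S \<noteq> {}"
        using \<open>0 \<in> S\<close> by blast
      fix \<mu> assume "\<mu> \<in> S"
      then show "\<mu> \<le> b y / a y"
        using \<open>a y > 0\<close> by (simp add: S_def field_simps)
    qed
    ultimately show ?thesis
      by (simp add: field_simps)
  qed (simp add: assms(2))
  then have "Sup S \<in> S"
    unfolding S_def by blast
  then have "(GREATEST \<mu>. \<mu> \<in> S) = Sup S"
    using \<open>bdd_above S\<close> by (intro Greatest_equality cSup_upper) auto
  with \<open>Sup S \<in> S\<close> show ?thesis
    unfolding S_def by simp
qed

text \<open>The defining maximum of the lower bound exists: measured against minimal-norm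
  preimages, the admissible \<open>\<mu>\<close> form a closed half-line.\<close>

lemma lower_bound_preimage:
  fixes Np :: "real^'p \<Rightarrow> real" and Nn :: "real^'n \<Rightarrow> real" and M :: "real^'p^'n"
  assumes p: "is_norm Np" and n: "is_norm Nn" and "surj ((*v) M)"
  shows "\<exists>x. M *v x = y \<and> lower_bound Np Nn M * Np x \<le> Nn y"
proof -
  have "\<forall>y. \<exists>x. M *v x = y \<and> (\<forall>x'. M *v x' = y \<longrightarrow> Np x \<le> Np x')"
    using exists_min_norm_preimage[OF p matrix_vector_mul_linear] assms(3) by blast
  then obtain m where m: "\<And>y. M *v m y = y" "\<And>y x. M *v x = y \<Longrightarrow> Np (m y) \<le> Np x"
    unfolding choice_iff by blast
  have admissible_iff:
    "(\<forall>y\<in>range ((*v) M). \<exists>x. M *v x = y \<and> \<mu> * Np x \<le> Nn y) \<longleftrightarrow> (\<forall>y. \<mu> * Np (m y) \<le> Nn y)"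
    for \<mu>
  proof
    assume admissible: "\<forall>y\<in>range ((*v) M). \<exists>x. M *v x = y \<and> \<mu> * Np x \<le> Nn y"
    show "\<forall>y. \<mu> * Np (m y) \<le> Nn y"
    proof
      fix y
      obtain x where x: "M *v x = y" "\<mu> * Np x \<le> Nn y"
        using admissible assms(3) by (metis rangeI surjD)
      show "\<mu> * Np (m y) \<le> Nn y"
      proof (cases "\<mu> \<ge> 0")
        case True
        then show ?thesis using m(2)[OF x(1)] x(2) by (meson mult_left_mono order_trans)
      qed (meson is_norm_nonneg[OF p] is_norm_nonneg[OF n] mult_nonpos_nonneg nle_le order_trans)
    qed
  qed (use m(1) in blast)
  have "m 1 \<noteq> 0"
  proof
    assume "m 1 = 0"
    then have "(1::real^'n) = 0"
      using m(1)[of 1] by simp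
    then show False
      by (simp add: vec_eq_iff)
  qed
  then have "lower_bound Np Nn M * Np (m y) \<le> Nn y"
    unfolding lower_bound_def admissible_iff
    by (intro Greatest_mult_le is_norm_nonneg[OF p] is_norm_nonneg[OF n] is_norm_pos[OF p])
  then show ?thesis
    using m(1) by blast
qed

lemma lower_bound_preimage_le:
  fixes Np :: "real^'p \<Rightarrow> real" and Nn :: "real^'n \<Rightarrow> real" and M :: "real^'p^'n"
  assumes p: "is_norm Np" and n: "is_norm Nn" and "surj ((*v) M)"
    and "Nn y \<le> lower_bound Np Nn M * r" and "0 \<le> r"
  shows "\<exists>x. M *v x = y \<and> Np x \<le> r"
proof (cases "lower_bound Np Nn M > 0")
  case True
  obtain x where "M *v x = y" "lower_bound Np Nn M * Np x \<le> Nn y"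
    using lower_bound_preimage[OF p n assms(3)] by blast
  with True assms(4) show ?thesis
    by (metis mult_le_cancel_left_pos order_trans)
next
  case False
  then have "Nn y \<le> 0"
    using assms(4,5) by (meson mult_nonpos_nonneg not_less order_trans)
  then have "y = 0"
    using is_norm_nonneg[OF n, of y] is_norm_eq_zero_iff[OF n, of y] by linarith
  then show ?thesis
    using assms(5) by (intro exI[of _ 0]) (simp add: is_norm_zero[OF p])
qed

lemma is_norm_affine_image_le:
  fixes Nn :: "real^'n \<Rightarrow> real" and Np :: "real^'p \<Rightarrow> real"
    and A :: "real^'m^'n" and G :: "real^'p^'m"
  assumes n: "is_norm Nn" and p: "is_norm Np" and "Np z \<le> 1" and "0 \<le> \<alpha>"
  shows "Nn (A *v (c + \<alpha> *\<^sub>R (G *v z))) \<le> Nn (A *v c) + \<alpha> * op_norm Np Nn (A ** G)"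
proof -
  have "A *v (c + \<alpha> *\<^sub>R (G *v z)) = A *v c + \<alpha> *\<^sub>R ((A ** G) *v z)"
    by (simp add: matrix_vector_right_distrib matrix_vector_mult_scaleR matrix_vector_mul_assoc)
  then have "Nn (A *v (c + \<alpha> *\<^sub>R (G *v z))) \<le> Nn (A *v c) + \<alpha> * Nn ((A ** G) *v z)"
    using is_norm_triangle[OF n, of "A *v c" "\<alpha> *\<^sub>R ((A ** G) *v z)"] assms(4)
    by (simp add: is_norm_scaleR[OF n])
  also have "\<dots> \<le> Nn (A *v c) + \<alpha> * (op_norm Np Nn (A ** G) * Np z)"
    using op_norm_nonneg_bound(2)[OF p n] assms(4) by (simp add: mult_left_mono)
  also have "\<dots> \<le> Nn (A *v c) + \<alpha> * op_norm Np Nn (A ** G)"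
    using op_norm_nonneg_bound(1)[OF p n] assms(3,4) by (simp add: mult_left_le mult_left_mono)
  finally show ?thesis .
qed

lemma le_div_sum_bounds:
  fixes L K e \<alpha> :: real
  assumes "0 \<le> e" and "e \<le> L" and "0 \<le> K" and "0 \<le> \<alpha>" and "\<alpha> \<le> (L - e) / (L + K)"
  shows "\<alpha> \<le> 1" and "e + \<alpha> * K \<le> L * (1 - \<alpha>)"
proof -
  have "\<alpha> * (L + K) \<le> L - e \<and> \<alpha> \<le> 1"
  proof (cases "L + K = 0")
    case True
    then show ?thesis using assms by simp
  next
    case False
    then have pos: "L + K > 0"
      using assms by linarith
    then have "\<alpha> * (L + K) \<le> L - e"
      using assms(5) by (simp add: field_simps)
    moreover from this have "\<alpha> * (L + K) \<le> L + K"
      using assms(1,3) by linarith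
    ultimately show ?thesis
      using pos mult_le_cancel_right2 by blast
  qed
  then show "\<alpha> \<le> 1" and "e + \<alpha> * K \<le> L * (1 - \<alpha>)"
    by (simp_all add: algebra_simps)
qed

theorem lemma6:
  fixes Nn :: "real^'n \<Rightarrow> real" and Nm :: "real^'m \<Rightarrow> real" and Np :: "real^'p \<Rightarrow> real"
    and P Pt :: "real^'m^'n" and c :: "real^'m" and G :: "real^'p^'m" and \<alpha> :: real
  assumes "is_norm Nn" and "is_norm Nm" and "is_norm Np"
    and "rank P = CARD('n)"
    and "rank G = CARD('m)"
    and "Nn ((Pt - P) *v c) \<le> lower_bound Np Nn (P ** G)"
    and "0 \<le> \<alpha>"
    and "\<alpha> \<le> (lower_bound Np Nn (P ** G) - Nn ((Pt - P) *v c)) /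
               (lower_bound Np Nn (P ** G) + op_norm Np Nn ((Pt - P) ** G))"
  shows "(\<lambda>x. Pt *v x) ` ((\<lambda>z. c + \<alpha> *\<^sub>R (G *v z)) ` unit_ball Np)
           \<subseteq> (\<lambda>x. P *v x) ` ((\<lambda>z. c + G *v z) ` unit_ball Np)"
proof
  let ?L = "lower_bound Np Nn (P ** G)"
  fix y assume "y \<in> (\<lambda>x. Pt *v x) ` ((\<lambda>z. c + \<alpha> *\<^sub>R (G *v z)) ` unit_ball Np)"
  then obtain z where z: "Np z \<le> 1" and y: "y = Pt *v (c + \<alpha> *\<^sub>R (G *v z))"
    by (auto simp: unit_ball_def)
  define v where "v = (Pt - P) *v (c + \<alpha> *\<^sub>R (G *v z))"
  have "surj ((*v) P)" and "surj ((*v) G)"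
    using assms(4,5) full_rank_surjective by blast+
  moreover have "(*v) (P ** G) = (*v) P \<circ> (*v) G"
    by (simp add: fun_eq_iff matrix_vector_mul_assoc)
  ultimately have "surj ((*v) (P ** G))"
    using comp_surj by metis
  moreover note bounds = le_div_sum_bounds[OF is_norm_nonneg[OF assms(1)] assms(6)
      op_norm_nonneg_bound(1)[OF assms(3,1)] assms(7,8)]
  moreover have "Nn v \<le> ?L * (1 - \<alpha>)"
    unfolding v_def using is_norm_affine_image_le[OF assms(1,3) z assms(7)] bounds(2)
    by (rule order_trans)
  ultimately obtain w' where w': "(P ** G) *v w' = v" "Np w' \<le> 1 - \<alpha>"
    using lower_bound_preimage_le[OF assms(3,1)] by (meson diff_ge_0_iff_ge)
  have "Np (\<alpha> *\<^sub>R z + w') \<le> 1"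
    using is_norm_triangle[OF assms(3), of "\<alpha> *\<^sub>R z" w'] z w'(2) assms(7)
      mult_left_le[of "Np z" \<alpha>] by (simp add: is_norm_scaleR[OF assms(3)])
  moreover have "P *v (c + G *v (\<alpha> *\<^sub>R z + w')) = y"
    using w'(1) unfolding y v_def
    by (simp add: matrix_vector_right_distrib matrix_vector_mult_scaleR
        matrix_vector_mul_assoc[symmetric] matrix_vector_mult_diff_rdistrib algebra_simps)
  ultimately show "y \<in> (\<lambda>x. P *v x) ` ((\<lambda>z. c + G *v z) ` unit_ball Np)"
    unfolding unit_ball_def by blast
qed

end
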